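(* Let $\mathcal H=H^1_0([0,1];\mathbb R^d)$ and, for $n\ge1$, let $\mathcal H_n\subset\mathcal H$ be the subspace of functions which are affine on each interval $[i/n,(i+1)/n]$, $i=0,\dots,n-1$. Then for each $1<q<2$ there is $C_q$ such that $\epsilon_q(\mathcal H_n,\mathcal H)\le C_q\,n^{\frac1q-1}$ for all $n\ge1$.
   Context: $H^1_0$ consists of absolutely continuous $f$ with $f_0=0$, with norm $\|f\|_{H^1}^2=\int_0^1|\dot f|^2$. For a closed subspace $\tilde{\mathcal H}\subset\mathcal H$ with orthogonal projection $\tilde\pi$, $\epsilon_q(\tilde{\mathcal H},\mathcal H)=\sup_{h\in\mathcal H}\frac{\|h-\tilde\pi(h)\|_{q\text{-var};[0,1]}}{\|h\|_{\mathcal H}}$, where $\|f\|_{q\text{-var}}^q=\sup_{0=t_0\le\dots\le t_m=1}\sum_i|f_{t_{i+1}}-f_{t_i}|^q$. *)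

theory Defs
  imports "HOL-Analysis.Analysis"
begin

definition L2_01 :: "(real \<Rightarrow> 'a::euclidean_space) \<Rightarrow> bool" where
  "L2_01 g \<longleftrightarrow> g absolutely_integrable_on {0..1} \<and> (\<lambda>s. (norm (g s))\<^sup>2) integrable_on {0..1}"

text \<open>The Cameron--Martin space H^1_0([0,1];R^d): absolutely continuous paths starting at 0
  with square integrable derivative, i.e. f t = integral over [0,t] of g with g in L^2.
  Paths are normalised to be 0 outside [0,1] so that they are determined by their values on [0,1].\<close>
definition H10 :: "(real \<Rightarrow> 'a::euclidean_space) set" where
  "H10 = {f. \<exists>g. L2_01 g \<and> (\<forall>t\<in>{0..1}. f t = integral {0..t} g) \<and> (\<forall>t. t \<notin> {0..1} \<longrightarrow> f t = 0)}"

text \<open>A derivative (a.e. unique) of an element of H10.\<close>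
definition H_deriv :: "(real \<Rightarrow> 'a::euclidean_space) \<Rightarrow> real \<Rightarrow> 'a" where
  "H_deriv f = (SOME g. L2_01 g \<and> (\<forall>t\<in>{0..1}. f t = integral {0..t} g))"

definition H_inner :: "(real \<Rightarrow> 'a::euclidean_space) \<Rightarrow> (real \<Rightarrow> 'a) \<Rightarrow> real" where
  "H_inner f k = integral {0..1} (\<lambda>s. H_deriv f s \<bullet> H_deriv k s)"

definition H_norm :: "(real \<Rightarrow> 'a::euclidean_space) \<Rightarrow> real" where
  "H_norm f = sqrt (integral {0..1} (\<lambda>s. (norm (H_deriv f s))\<^sup>2))"

definition H_proj :: "(real \<Rightarrow> 'a::euclidean_space) set \<Rightarrow> (real \<Rightarrow> 'a) \<Rightarrow> (real \<Rightarrow> 'a)" where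
  "H_proj S h = (THE p. p \<in> S \<and> (\<forall>k\<in>S. H_inner (\<lambda>t. h t - p t) k = 0))"

definition Hn :: "nat \<Rightarrow> (real \<Rightarrow> 'a::euclidean_space) set" where
  "Hn n = {f \<in> H10. \<forall>i<n. \<exists>a b. \<forall>t\<in>{real i / real n .. real (Suc i) / real n}. f t = a + t *\<^sub>R b}"

definition qvar_pow :: "real \<Rightarrow> (real \<Rightarrow> 'a::real_normed_vector) \<Rightarrow> ereal" where
  "qvar_pow q f = (SUP mt \<in> {(m, t). t 0 = 0 \<and> t m = 1 \<and> (\<forall>i<m. t i \<le> t (Suc i))}.
      ereal (\<Sum>i<fst mt. (norm (f (snd mt (Suc i)) - f (snd mt i))) powr q))"

definition qvar_norm :: "real \<Rightarrow> (real \<Rightarrow> 'a::real_normed_vector) \<Rightarrow> ereal" where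
  "qvar_norm q f = (case qvar_pow q f of ereal x \<Rightarrow> ereal (x powr (1 / q)) | _ \<Rightarrow> \<infinity>)"

definition eps_q :: "real \<Rightarrow> (real \<Rightarrow> 'a::euclidean_space) set \<Rightarrow> ereal" where
  "eps_q q S = (SUP h \<in> {h \<in> H10. H_norm h \<noteq> 0}.
      qvar_norm q (\<lambda>t. h t - H_proj S h t) / ereal (H_norm h))"

end

theory Submission
  imports Defs
begin

(* The orthogonal projection onto H_n is the piecewise linear interpolation I_n h of h at the
   grid points i/n: the error h - I_n h vanishes on the grid, and the inner product of any f with
   a piecewise affine k only sees the increments of f over the cells.

   For the q-variation of e = h - I_n h put phi = |h'| + |(I_n h)'| and m_j = integral of phi over
   the j-th cell. Since e vanishes on the grid, an increment e(u) - e(s) is bounded by at most two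
   integrals of phi, each over a subinterval of a single cell, and for [x,y] inside cell j
   (int_x^y phi)^q <= m_j^(q-1) int_x^y phi. The right-hand side is additive over a partition, so
   every partition sum of |e(t_(i+1)) - e(t_i)|^q is at most 2^q sum_j m_j^q. Finally
   m_j <= 2 (n^(-1) int_(cell j) |h'|^2)^(1/2) by Cauchy-Schwarz, and concavity of x^(q/2) gives
   sum_j m_j^q <= 2^q n^(1-q) |h|_H^q, i.e. |e|_(q-var) <= 4 n^(1/q-1) |h|_H. *)

section \<open>Functions with vanishing indefinite integrals\<close>

text \<open>The densities of \<open>g\<^sup>+\<close> and \<open>g\<^sup>-\<close> define finite measures that agree on all rays
  \<open>{x<..}\<close>, hence coincide.\<close>
lemma AE_zero_if_integral_greaterThan_zero:
  fixes g :: "real \<Rightarrow> real"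
  assumes g: "integrable lborel g" and zero: "\<And>x. integral {x<..} g = 0"
  shows "AE y in lborel. g y = 0"
proof -
  have [measurable]: "g \<in> borel_measurable borel" using g by auto
  define M where "M = density lborel (\<lambda>x. ennreal (max 0 (g x)))"
  define N where "N = density lborel (\<lambda>x. ennreal (max 0 (- g x)))"
  have int_pos: "integrable lborel (\<lambda>y. indicator {x<..} y * max 0 (g y))"
    and int_neg: "integrable lborel (\<lambda>y. indicator {x<..} y * max 0 (- g y))"
    and int_g: "integrable lborel (\<lambda>y. indicator {x<..} y * g y)" for x :: real
    using g by (auto intro!: integrable_mult_indicator[where 'b=real, simplified])
  have "M = N"
  proof (rule measure_eqI_lessThan)
    show "sets M = sets borel" "sets N = sets borel" by (simp_all add: M_def N_def)
    fix x :: real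
    have M_eq: "emeasure M {x<..} = ennreal (\<integral>y. indicator {x<..} y * max 0 (g y) \<partial>lborel)"
      unfolding M_def using int_pos[of x]
      by (subst emeasure_density) (auto simp: indicator_def nn_integral_eq_integral[symmetric]
          intro!: nn_integral_cong)
    have N_eq: "emeasure N {x<..} = ennreal (\<integral>y. indicator {x<..} y * max 0 (- g y) \<partial>lborel)"
      unfolding N_def using int_neg[of x]
      by (subst emeasure_density) (auto simp: indicator_def nn_integral_eq_integral[symmetric]
          intro!: nn_integral_cong)
    have "(\<integral>y. indicator {x<..} y * g y \<partial>lborel) = 0"
      using set_borel_integral_eq_integral(2)[of "{x<..}" g] int_g[of x] zero[of x]
      by (simp add: set_integrable_def set_lebesgue_integral_def)
    moreover have "(\<integral>y. indicator {x<..} y * max 0 (g y) \<partial>lborel)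
        - (\<integral>y. indicator {x<..} y * max 0 (- g y) \<partial>lborel)
        = (\<integral>y. indicator {x<..} y * g y \<partial>lborel)"
      by (subst Bochner_Integration.integral_diff[symmetric, OF int_pos int_neg])
        (auto simp: indicator_def max_def intro!: Bochner_Integration.integral_cong)
    ultimately show "emeasure M {x<..} = emeasure N {x<..}" using M_eq N_eq by simp
    show "emeasure M {x<..} < \<infinity>" using M_eq by simp
  qed
  then have "AE y in lborel. ennreal (max 0 (g y)) = ennreal (max 0 (- g y))"
    unfolding M_def N_def
    by (intro sigma_finite_measure.density_unique[OF sigma_finite_lborel]) auto
  then show ?thesis
    by eventually_elim (auto simp: max_def split: if_splits)
qed

lemma negligible_nonzero_if_integral_atLeast_zero:
  fixes g :: "real \<Rightarrow> real"
  assumes g: "integrable lebesgue g" and zero: "\<And>x. (g has_integral 0) {x..}"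
  shows "negligible {y. g y \<noteq> 0}"
proof -
  obtain g' where g'_borel: "g' \<in> borel_measurable lborel" and g_g': "AE x in lborel. g x = g' x"
    using completion_ex_borel_measurable_real[of g lborel] g by auto
  have "(\<integral>\<^sup>+ x. ennreal (norm (g x)) \<partial>lborel) = (\<integral>\<^sup>+ x. ennreal (norm (g' x)) \<partial>lborel)"
    using g_g' by (intro nn_integral_cong_AE) auto
  with g g'_borel have "integrable lborel g'"
    by (auto simp: integrable_iff_bounded nn_integral_completion)
  have "integral {x<..} g' = 0" for x
  proof -
    have "(g has_integral 0) {x..} \<longleftrightarrow> (g has_integral 0) {x<..}"
    proof (rule has_integral_spike_set_eq)
      show "negligible {y \<in> {x..} - {x<..}. g y \<noteq> 0}"
        by (rule negligible_subset[of "{x}"]) auto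
      show "negligible {y \<in> {x<..} - {x..}. g y \<noteq> 0}"
        by (rule negligible_subset[of "{}"]) auto
    qed
    moreover have "AE y in lborel. y \<in> {x<..} \<longrightarrow> g y = g' y" using g_g' by auto
    ultimately show ?thesis
      using zero[of x] has_integral_AE[of "{x<..}" g g'] integral_unique by blast
  qed
  then have "AE y in lborel. g' y = 0"
    using AE_zero_if_integral_greaterThan_zero[OF \<open>integrable lborel g'\<close>] by blast
  with g_g' have "AE y in lborel. g y = 0" by eventually_elim auto
  then obtain N where N: "N \<in> sets borel" "emeasure lborel N = 0" "{y. g y \<noteq> 0} \<subseteq> N"
    by (auto elim!: AE_E)
  then have "negligible N" by (simp add: negligible_iff_emeasure0)
  then show ?thesis using N(3) by (rule negligible_subset)
qed

lemma negligible_nonzero_if_indefinite_integral_zero: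
  fixes h :: "real \<Rightarrow> real"
  assumes h: "h absolutely_integrable_on {a..b}"
    and zero: "\<And>t. t \<in> {a..b} \<Longrightarrow> integral {a..t} h = 0"
  shows "negligible {x \<in> {a..b}. h x \<noteq> 0}"
proof -
  define h0 where "h0 = (\<lambda>y. if y \<in> {a..b} then h y else 0)"
  have h_int: "h integrable_on {a..b}" using h absolutely_integrable_on_def by blast
  have h_tail: "(h has_integral 0) {c..b}" if "c \<in> {a..b}" for c
  proof -
    have "integral {a..c} h + integral {c..b} h = integral {a..b} h"
      using that by (intro Henstock_Kurzweil_Integration.integral_combine h_int) auto
    then have "integral {c..b} h = 0" using zero[of c] zero[of b] that by auto
    moreover have "h integrable_on {c..b}"
      using that by (intro integrable_subinterval_real[OF h_int]) auto
    ultimately show ?thesis using integrable_integral by fastforce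
  qed
  have "(h0 has_integral 0) {x..}" for x
  proof -
    have "(h has_integral 0) ({a..b} \<inter> {x..})"
    proof (cases "max a x \<le> b")
      case True
      then have "{a..b} \<inter> {x..} = {max a x..b}" by auto
      with True show ?thesis using h_tail[of "max a x"] by auto
    qed auto
    then show ?thesis unfolding h0_def using has_integral_restrict_Int by blast
  qed
  moreover have "integrable lebesgue h0"
    using absolutely_integrable_restrict_UNIV[of "{a..b}" h] h
    by (simp add: h0_def set_integrable_def)
  ultimately have "negligible {y. h0 y \<noteq> 0}"
    using negligible_nonzero_if_integral_atLeast_zero by blast
  then show ?thesis by (rule negligible_subset) (auto simp: h0_def)
qed

lemma negligible_neq_const_if_indefinite_integral_linear:
  fixes K :: "real \<Rightarrow> 'a::euclidean_space"
  assumes K: "K absolutely_integrable_on {a..b}"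
    and lin: "\<And>t. t \<in> {a..b} \<Longrightarrow> integral {a..t} K = (t - a) *\<^sub>R c"
  shows "negligible {x \<in> {a..b}. K x \<noteq> c}"
proof -
  have "negligible {x \<in> {a..b}. (K x - c) \<bullet> e \<noteq> 0}" if "e \<in> Basis" for e
  proof (rule negligible_nonzero_if_indefinite_integral_zero)
    show "(\<lambda>x. (K x - c) \<bullet> e) absolutely_integrable_on {a..b}"
      using K by (intro absolutely_integrable_component set_integral_diff(1)) auto
    fix t assume t: "t \<in> {a..b}"
    have K_int: "K integrable_on {a..t}"
      using K t absolutely_integrable_on_def integrable_subinterval_real[of K a b a t] by auto
    have "integral {a..t} (\<lambda>x. (K x - c) \<bullet> e) = integral {a..t} (\<lambda>x. K x - c) \<bullet> e"
      using K_int by (intro integral_component_eq integrable_diff) auto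
    also have "integral {a..t} (\<lambda>x. K x - c) = integral {a..t} K - integral {a..t} (\<lambda>x. c)"
      using K_int by (intro integral_diff) auto
    also have "\<dots> = 0" using lin[OF t] t by simp
    finally show "integral {a..t} (\<lambda>x. (K x - c) \<bullet> e) = 0" by simp
  qed
  then have "negligible (\<Union>e\<in>Basis. {x \<in> {a..b}. (K x - c) \<bullet> e \<noteq> 0})"
    by (intro negligible_Union) auto
  moreover have "{x \<in> {a..b}. K x \<noteq> c} \<subseteq> (\<Union>e\<in>Basis. {x \<in> {a..b}. (K x - c) \<bullet> e \<noteq> 0})"
    using euclidean_all_zero_iff[of "K _ - c"] by auto
  ultimately show ?thesis using negligible_subset by blast
qed

lemma integral_combine_chain:
  fixes f :: "real \<Rightarrow> 'b::banach" and t :: "nat \<Rightarrow> real"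
  assumes mono: "\<And>i. i < m \<Longrightarrow> t i \<le> t (Suc i)"
    and int: "\<And>i. i < m \<Longrightarrow> f integrable_on {t i..t (Suc i)}"
  shows "f integrable_on {t 0..t m}"
    and "integral {t 0..t m} f = (\<Sum>i<m. integral {t i..t (Suc i)} f)"
proof -
  have "t 0 \<le> t m \<and> f integrable_on {t 0..t m} \<and>
      integral {t 0..t m} f = (\<Sum>i<m. integral {t i..t (Suc i)} f)"
    using assms
  proof (induction m)
    case 0
    then show ?case using integrable_on_refl[of f "t 0"] by simp
  next
    case (Suc m)
    then have IH: "t 0 \<le> t m" "f integrable_on {t 0..t m}"
        "integral {t 0..t m} f = (\<Sum>i<m. integral {t i..t (Suc i)} f)"
      and last: "t m \<le> t (Suc m)" "f integrable_on {t m..t (Suc m)}"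
      by auto
    have "f integrable_on {t 0..t (Suc m)}"
      using Henstock_Kurzweil_Integration.integrable_combine[OF IH(1) last(1) IH(2) last(2)] .
    moreover have "integral {t 0..t m} f + integral {t m..t (Suc m)} f
        = integral {t 0..t (Suc m)} f"
      using IH(1) last(1) calculation by (rule Henstock_Kurzweil_Integration.integral_combine)
    ultimately show ?case using IH last by simp
  qed
  then show "f integrable_on {t 0..t m}"
    and "integral {t 0..t m} f = (\<Sum>i<m. integral {t i..t (Suc i)} f)"
    by auto
qed

lemma integral_Icc_diff:
  fixes g :: "real \<Rightarrow> 'b::banach"
  assumes "g integrable_on {a..t}" "a \<le> s" "s \<le> t"
  shows "integral {a..t} g - integral {a..s} g = integral {s..t} g"
  using Henstock_Kurzweil_Integration.integral_combine[of a s t g] assms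
  by (simp add: algebra_simps)

lemma chain_in_unit_interval:
  fixes t :: "nat \<Rightarrow> real"
  assumes mono: "\<And>i. i < m \<Longrightarrow> t i \<le> t (Suc i)" and "t 0 = 0" "t m = 1" "i \<le> m"
  shows "t i \<in> {0..1}"
proof -
  have "{0..<i} \<subseteq> {..<m}" "{i..<m} \<subseteq> {..<m}" using \<open>i \<le> m\<close> by auto
  then show ?thesis
    using lift_Suc_mono_le_ivl[of "{..<m}" t 0 i] lift_Suc_mono_le_ivl[of "{..<m}" t i m] assms
    by auto
qed

lemma powr_add_le_of_powr_le:
  fixes A B W q :: real
  assumes "0 \<le> A" "0 \<le> B" "0 \<le> q" "A powr q \<le> W" "B powr q \<le> W"
  shows "(A + B) powr q \<le> 2 powr q * W"
proof -
  have "(A + B) powr q \<le> (2 * max A B) powr q" using assms by (intro powr_mono2) auto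
  also have "\<dots> = 2 powr q * max A B powr q" using assms by (simp add: powr_mult)
  also have "max A B powr q \<le> W" using assms by (simp add: max_def)
  finally show ?thesis by simp
qed

lemma Cauchy_Schwarz_integral_Icc:
  fixes g :: "real \<Rightarrow> real"
  assumes ab: "a < b" and g: "g integrable_on {a..b}" and g2: "(\<lambda>x. (g x)\<^sup>2) integrable_on {a..b}"
  shows "integral {a..b} g \<le> sqrt (b - a) * sqrt (integral {a..b} (\<lambda>x. (g x)\<^sup>2))"
proof -
  define I G L where "I = integral {a..b} g" and "G = integral {a..b} (\<lambda>x. (g x)\<^sup>2)"
    and "L = b - a"
  have L: "L > 0" using ab L_def by simp
  define l where "l = I / L"
  have "integral {a..b} (\<lambda>x. 2 * l * g x) \<le> integral {a..b} (\<lambda>x. (g x)\<^sup>2 + l\<^sup>2)"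
  proof (rule integral_le)
    show "(\<lambda>x. 2 * l * g x) integrable_on {a..b}" using integrable_cmul[OF g, of "2 * l"] by simp
    show "(\<lambda>x. (g x)\<^sup>2 + l\<^sup>2) integrable_on {a..b}" using g2 by (intro integrable_add) auto
    fix x
    show "2 * l * g x \<le> (g x)\<^sup>2 + l\<^sup>2"
      using zero_le_power2[of "g x - l"] by (simp add: power2_eq_square algebra_simps)
  qed
  also have "integral {a..b} (\<lambda>x. (g x)\<^sup>2 + l\<^sup>2) = G + l\<^sup>2 * L"
    using integral_add[OF g2 integrable_const_ivl[of "l\<^sup>2" a b]] ab by (simp add: G_def L_def)
  finally have "2 * l * I \<le> G + l\<^sup>2 * L" unfolding I_def by simp
  then have "I\<^sup>2 \<le> L * G" using L unfolding l_def by (simp add: power2_eq_square field_simps)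
  then have "I \<le> sqrt (L * G)" using real_le_rsqrt by blast
  then show ?thesis unfolding I_def G_def L_def by (simp add: real_sqrt_mult)
qed

lemma sum_powr_le_card_powr_sum:
  fixes y :: "'i \<Rightarrow> real"
  assumes A: "finite A" and y: "\<And>j. j \<in> A \<Longrightarrow> 0 \<le> y j" and r: "0 < r" "r \<le> 1"
  shows "(\<Sum>j\<in>A. y j powr r) \<le> real (card A) powr (1 - r) * (\<Sum>j\<in>A. y j) powr r"
proof (cases "(\<Sum>j\<in>A. y j) = 0")
  case True
  then have "\<forall>j\<in>A. y j = 0" using A y by (subst sum_nonneg_eq_0_iff[symmetric]) auto
  then show ?thesis by simp
next
  case False
  define S where "S = (\<Sum>j\<in>A. y j)"
  have S: "S > 0" using False y S_def by (simp add: order_less_le sum_nonneg)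
  then have "A \<noteq> {}" unfolding S_def by auto
  then have n: "real (card A) > 0" using A by (simp add: card_gt_0_iff)
  define c where "c = S / real (card A)"
  have c: "c > 0" using S n c_def by simp
  have Young: "y j powr r * c powr (1 - r) \<le> r * y j + (1 - r) * c" if "j \<in> A" for j
  proof (cases "y j = 0 \<or> r = 1")
    case True then show ?thesis using r c y[OF that] by auto
  next
    case False
    then show ?thesis using Youngs_inequality_0[of r "1 - r" "y j" c] r c y[OF that] by simp
  qed
  have "(\<Sum>j\<in>A. y j powr r) * c powr (1 - r) = (\<Sum>j\<in>A. y j powr r * c powr (1 - r))"
    by (simp add: sum_distrib_right)
  also have "\<dots> \<le> (\<Sum>j\<in>A. r * y j + (1 - r) * c)" by (intro sum_mono Young)
  also have "\<dots> = r * S + (1 - r) * c * real (card A)"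
    by (simp add: sum.distrib sum_distrib_left S_def)
  also have "\<dots> = S" using n by (simp add: c_def field_simps)
  finally have "(\<Sum>j\<in>A. y j powr r) \<le> S / c powr (1 - r)" using c by (simp add: field_simps)
  also have "S / c powr (1 - r) = real (card A) powr (1 - r) * S powr r"
    using S n by (simp add: c_def powr_divide powr_diff field_simps)
  finally show ?thesis unfolding S_def .
qed

lemma L2_01_subinterval:
  fixes g :: "real \<Rightarrow> 'a::euclidean_space"
  assumes "L2_01 g" "0 \<le> a" "b \<le> 1"
  shows "g absolutely_integrable_on {a..b}" "g integrable_on {a..b}"
    "(\<lambda>x. norm (g x)) integrable_on {a..b}" "(\<lambda>x. (norm (g x))\<^sup>2) integrable_on {a..b}"
proof -
  have sub: "{a..b} \<subseteq> {0..1}" using assms by auto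
  show abs_int: "g absolutely_integrable_on {a..b}"
    using assms(1) sub absolutely_integrable_on_subinterval unfolding L2_01_def by blast
  then show "g integrable_on {a..b}" "(\<lambda>x. norm (g x)) integrable_on {a..b}"
    using absolutely_integrable_on_def by blast+
  show "(\<lambda>x. (norm (g x))\<^sup>2) integrable_on {a..b}"
    using assms(1) sub integrable_on_subinterval unfolding L2_01_def by fastforce
qed

lemma L2_01_diff:
  fixes g1 g2 :: "real \<Rightarrow> 'a::euclidean_space"
  assumes "L2_01 g1" "L2_01 g2"
  shows "L2_01 (\<lambda>x. g1 x - g2 x)"
proof -
  have abs_int: "(\<lambda>x. g1 x - g2 x) absolutely_integrable_on {0..1}"
    using assms unfolding L2_01_def by (intro set_integral_diff(1)) auto
  then have "(\<lambda>x. g1 x - g2 x) \<in> borel_measurable (lebesgue_on {0..1})"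
    using absolutely_integrable_on_def integrable_imp_measurable by blast
  then have meas: "(\<lambda>x. (norm (g1 x - g2 x))\<^sup>2) \<in> borel_measurable (lebesgue_on {0..1})"
    by measurable
  have dom: "(\<lambda>x. 2 * (norm (g1 x))\<^sup>2 + 2 * (norm (g2 x))\<^sup>2) integrable_on {0..1}"
    using assms unfolding L2_01_def by (intro integrable_add integrable_on_cmult_left) auto
  have "(\<lambda>x. (norm (g1 x - g2 x))\<^sup>2) integrable_on {0..1}"
  proof (rule measurable_bounded_by_integrable_imp_integrable[OF meas dom])
    fix x
    have "norm (g1 x - g2 x) \<le> norm (g1 x) + norm (g2 x)" by (rule norm_triangle_ineq4)
    then have "(norm (g1 x - g2 x))\<^sup>2 \<le> (norm (g1 x) + norm (g2 x))\<^sup>2"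
      by (simp add: power_mono)
    also have "\<dots> \<le> 2 * (norm (g1 x))\<^sup>2 + 2 * (norm (g2 x))\<^sup>2"
      using zero_le_power2[of "norm (g1 x) - norm (g2 x)"]
      by (simp add: power2_eq_square algebra_simps)
    finally show "norm ((norm (g1 x - g2 x))\<^sup>2) \<le> 2 * (norm (g1 x))\<^sup>2 + 2 * (norm (g2 x))\<^sup>2"
      by simp
  qed auto
  with abs_int show ?thesis unfolding L2_01_def by blast
qed

lemma H10I:
  "L2_01 g \<Longrightarrow> (\<And>t. t \<in> {0..1} \<Longrightarrow> f t = integral {0..t} g) \<Longrightarrow> (\<And>t. t \<notin> {0..1} \<Longrightarrow> f t = 0)
    \<Longrightarrow> f \<in> H10"
  unfolding H10_def by blast

lemma H10D:
  assumes "f \<in> H10"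
  shows "L2_01 (H_deriv f)" "\<And>t. t \<in> {0..1} \<Longrightarrow> f t = integral {0..t} (H_deriv f)"
    "\<And>t. t \<notin> {0..1} \<Longrightarrow> f t = 0"
proof -
  from assms obtain g where "L2_01 g \<and> (\<forall>t\<in>{0..1}. f t = integral {0..t} g)"
    unfolding H10_def by blast
  then have "L2_01 (H_deriv f) \<and> (\<forall>t\<in>{0..1}. f t = integral {0..t} (H_deriv f))"
    unfolding H_deriv_def
    by (rule someI[where P="\<lambda>g. L2_01 g \<and> (\<forall>t\<in>{0..1}. f t = integral {0..t} g)"])
  then show "L2_01 (H_deriv f)" "\<And>t. t \<in> {0..1} \<Longrightarrow> f t = integral {0..t} (H_deriv f)"
    by auto
  show "\<And>t. t \<notin> {0..1} \<Longrightarrow> f t = 0" using assms unfolding H10_def by blast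
qed

lemma H10_zero: "f \<in> H10 \<Longrightarrow> f 0 = 0"
  using H10D(2)[of f 0] by simp

lemma H10_increment:
  assumes "f \<in> H10" "0 \<le> s" "s \<le> t" "t \<le> 1"
  shows "f t - f s = integral {s..t} (H_deriv f)"
  using integral_Icc_diff[of "H_deriv f" 0 t s]
    L2_01_subinterval(2)[OF H10D(1)[OF assms(1)], of 0 t]
    H10D(2)[OF assms(1)] assms
  by simp

lemma H10_diff:
  assumes "f1 \<in> H10" "f2 \<in> H10"
  shows "(\<lambda>t. f1 t - f2 t) \<in> H10"
proof (rule H10I)
  show "L2_01 (\<lambda>x. H_deriv f1 x - H_deriv f2 x)"
    using H10D(1) assms by (intro L2_01_diff) auto
  fix t
  show "t \<in> {0..1} \<Longrightarrow> f1 t - f2 t = integral {0..t} (\<lambda>x. H_deriv f1 x - H_deriv f2 x)"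
    using H10D(1) H10D(2)[OF assms(1), of t] H10D(2)[OF assms(2), of t] assms
    by (subst integral_diff) (auto intro: L2_01_subinterval)
  show "t \<notin> {0..1} \<Longrightarrow> f1 t - f2 t = 0" using H10D(3)[OF assms(1)] H10D(3)[OF assms(2)] by simp
qed

lemma H_norm_nonneg: "0 \<le> H_norm f"
proof -
  have "0 \<le> integral {0..1} (\<lambda>s. (norm (H_deriv f s))\<^sup>2)"
    by (cases "(\<lambda>s. (norm (H_deriv f s))\<^sup>2) integrable_on {0..1}")
      (auto intro: integral_nonneg simp: not_integrable_integral)
  then show ?thesis unfolding H_norm_def by simp
qed

definition grid :: "nat \<Rightarrow> nat \<Rightarrow> real" where
  "grid n i = real i / real n"

abbreviation cell :: "nat \<Rightarrow> nat \<Rightarrow> real set" where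
  "cell n i \<equiv> {grid n i..grid n (Suc i)}"

lemma grid_0 [simp]: "grid n 0 = 0"
  by (simp add: grid_def)

lemma grid_self: "0 < n \<Longrightarrow> grid n n = 1"
  by (simp add: grid_def)

lemma grid_Suc_diff: "0 < n \<Longrightarrow> grid n (Suc i) - grid n i = 1 / real n"
  by (simp add: grid_def field_simps)

lemma grid_less_Suc: "0 < n \<Longrightarrow> grid n i < grid n (Suc i)"
  by (simp add: grid_def divide_strict_right_mono)

lemma grid_mono: "i \<le> j \<Longrightarrow> grid n i \<le> grid n j"
  by (simp add: grid_def divide_right_mono)

lemma grid_nonneg: "0 \<le> grid n i"
  by (simp add: grid_def)

lemma grid_le_1: "j \<le> n \<Longrightarrow> grid n j \<le> 1"
  by (cases "n = 0") (auto simp: grid_def divide_le_eq_1)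

lemma cell_subset_unit_interval: "j < n \<Longrightarrow> cell n j \<subseteq> {0..1}"
  using grid_nonneg[of n j] grid_le_1[of "Suc j" n] by auto

lemma cell_cover:
  assumes n: "0 < n" and t: "t \<in> {0..1}"
  obtains i where "i < n" "t \<in> cell n i"
proof (cases "t = 1")
  case True
  with n show ?thesis
    using that[of "n - 1"] by (auto simp: grid_def field_simps of_nat_diff)
next
  case False
  define i where "i = nat \<lfloor>t * n\<rfloor>"
  have "t * n < n" using t False n by (simp add: mult_less_cancel_right1)
  then have "i < n" using t unfolding i_def by (simp add: nat_less_iff floor_less_iff)
  moreover have "real i = of_int \<lfloor>t * n\<rfloor>" using t unfolding i_def by simp
  then have "real i \<le> t * n" "t * n \<le> real i + 1"
    using floor_correct[of "t * real n"] by linarith+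
  ultimately show ?thesis
    using n that[of i] by (auto simp: grid_def field_simps)
qed

lemma Hn_iff: "f \<in> Hn n \<longleftrightarrow> f \<in> H10 \<and> (\<forall>i<n. \<exists>a b. \<forall>t\<in>cell n i. f t = a + t *\<^sub>R b)"
  unfolding Hn_def grid_def by simp

lemma Hn_piecewise_affineE:
  assumes "k \<in> Hn n"
  obtains A B where "\<And>i t. i < n \<Longrightarrow> t \<in> cell n i \<Longrightarrow> k t = A i + t *\<^sub>R B i"
proof -
  have "\<forall>i. \<exists>ab. i < n \<longrightarrow> (\<forall>t\<in>cell n i. k t = fst ab + t *\<^sub>R snd ab)"
    using assms unfolding Hn_iff by auto
  then obtain ab where "\<And>i. i < n \<longrightarrow> (\<forall>t\<in>cell n i. k t = fst (ab i) + t *\<^sub>R snd (ab i))"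
    by metis
  then show ?thesis using that[of "\<lambda>i. fst (ab i)" "\<lambda>i. snd (ab i)"] by blast
qed

lemma Hn_diff:
  assumes f: "f \<in> Hn n" and g: "g \<in> Hn n"
  shows "(\<lambda>t. f t - g t) \<in> Hn n"
proof -
  obtain A1 B1 where f_aff: "\<And>i t. i < n \<Longrightarrow> t \<in> cell n i \<Longrightarrow> f t = A1 i + t *\<^sub>R B1 i"
    using Hn_piecewise_affineE[OF f] by blast
  obtain A2 B2 where g_aff: "\<And>i t. i < n \<Longrightarrow> t \<in> cell n i \<Longrightarrow> g t = A2 i + t *\<^sub>R B2 i"
    using Hn_piecewise_affineE[OF g] by blast
  have "\<exists>a b. \<forall>t\<in>cell n i. f t - g t = a + t *\<^sub>R b" if "i < n" for i
    using f_aff[OF that] g_aff[OF that]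
    by (intro exI[of _ "A1 i - A2 i"] exI[of _ "B1 i - B2 i"]) (auto simp: algebra_simps)
  moreover have "(\<lambda>t. f t - g t) \<in> H10" using f g by (intro H10_diff) (simp_all add: Hn_iff)
  ultimately show ?thesis by (simp add: Hn_iff)
qed

lemma increment_affine_on_cell:
  fixes d :: "real \<Rightarrow> 'a::real_vector"
  assumes n: "0 < n" and aff: "\<And>t. t \<in> cell n i \<Longrightarrow> d t = A + t *\<^sub>R B"
  shows "d (grid n (Suc i)) - d (grid n i) = B /\<^sub>R real n"
proof -
  have "d (grid n (Suc i)) - d (grid n i) = (grid n (Suc i) - grid n i) *\<^sub>R B"
    using aff[of "grid n i"] aff[of "grid n (Suc i)"] grid_mono[of i "Suc i" n]
    by (simp add: scaleR_diff_left)
  then show ?thesis using grid_Suc_diff[OF n, of i] by (simp add: inverse_eq_divide)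
qed

text \<open>Adjacent cells share an endpoint, so at an interior grid point both values are added up;
  this is irrelevant for integrals.\<close>
definition grid_step :: "nat \<Rightarrow> (nat \<Rightarrow> 'b::real_normed_vector) \<Rightarrow> real \<Rightarrow> 'b" where
  "grid_step n c x = (\<Sum>j<n. if x \<in> cell n j then c j else 0)"

lemma integrable_indicator_const_Icc:
  fixes c :: "'b::banach"
  shows "(\<lambda>x. if x \<in> {a..b} then c else 0) integrable_on {u..v::real}"
  by (simp only: integrable_restrict_Int Int_atLeastAtMost integrable_const_ivl)

lemma grid_step_integrable:
  fixes c :: "nat \<Rightarrow> 'b::banach"
  shows "grid_step n c integrable_on {u..v}"
  unfolding grid_step_def[abs_def]
  by (intro integrable_sum integrable_indicator_const_Icc) simp

lemma integral_grid_step: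
  fixes c :: "nat \<Rightarrow> 'b::banach"
  shows "integral {u..v} (grid_step n c) = (\<Sum>j<n. measure lborel (cell n j \<inter> {u..v}) *\<^sub>R c j)"
proof -
  have "integral {u..v} (grid_step n c)
      = (\<Sum>j<n. integral {u..v} (\<lambda>x. if x \<in> cell n j then c j else 0))"
    unfolding grid_step_def[abs_def]
    by (intro integral_sum integrable_indicator_const_Icc) simp
  also have "\<dots> = (\<Sum>j<n. measure lborel (cell n j \<inter> {u..v}) *\<^sub>R c j)"
    by (simp only: integral_restrict_Int Int_atLeastAtMost integral_const_real)
  finally show ?thesis .
qed

lemma integral_grid_step_initial:
  fixes c :: "nat \<Rightarrow> 'b::banach"
  assumes n: "0 < n" and k: "k < n" and t: "t \<in> cell n k"
  shows "integral {0..t} (grid_step n c) = (\<Sum>j<k. c j /\<^sub>R real n) + (t - grid n k) *\<^sub>R c k"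
proof -
  have "measure lborel (cell n j \<inter> {0..t}) *\<^sub>R c j
      = (if j \<in> {..<k} then c j /\<^sub>R real n else 0) + (if j = k then (t - grid n k) *\<^sub>R c k else 0)"
    for j
  proof (cases j k rule: linorder_cases)
    case less
    then have "grid n (Suc j) \<le> t" using grid_mono[of "Suc j" k n] t by auto
    then show ?thesis
      using less grid_nonneg[of n j] grid_Suc_diff[OF n, of j] grid_mono[of j "Suc j" n]
      by (auto simp: divide_inverse_commute)
  next
    case greater
    then have "t \<le> grid n j" using grid_mono[of "Suc k" j n] t by auto
    then show ?thesis using greater by auto
  qed (use t grid_nonneg[of n k] in auto)
  then have "integral {0..t} (grid_step n c)
      = (\<Sum>j<n. (if j \<in> {..<k} then c j /\<^sub>R real n else 0)
          + (if j = k then (t - grid n k) *\<^sub>R c k else 0))"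
    by (simp only: integral_grid_step)
  also have "\<dots> = (\<Sum>j\<in>{..<n} \<inter> {..<k}. c j /\<^sub>R real n) + (t - grid n k) *\<^sub>R c k"
    using k by (simp only: sum.distrib sum.inter_restrict[symmetric] finite_lessThan) simp
  also have "{..<n} \<inter> {..<k} = {..<k}" using k by auto
  finally show ?thesis .
qed

lemma integral_grid_step_cell:
  fixes c :: "nat \<Rightarrow> 'b::banach"
  assumes n: "0 < n" and j: "j < n"
  shows "integral (cell n j) (grid_step n c) = c j /\<^sub>R real n"
proof -
  have "integral (cell n j) (grid_step n c)
      = integral {0..grid n (Suc j)} (grid_step n c) - integral {0..grid n j} (grid_step n c)"
    using grid_nonneg grid_mono[of j "Suc j" n]
    by (intro integral_Icc_diff[symmetric] grid_step_integrable) auto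
  also have "\<dots> = c j /\<^sub>R real n"
    using grid_mono[of j "Suc j" n] grid_Suc_diff[OF n, of j]
    by (simp add: integral_grid_step_initial[OF n j] divide_inverse_commute)
  finally show ?thesis .
qed

lemma norm_grid_step_le: "norm (grid_step n c x) \<le> grid_step n (\<lambda>j. norm (c j)) x"
  unfolding grid_step_def by (rule order_trans[OF norm_sum]) (intro sum_mono, auto)

lemma grid_step_nonneg:
  fixes c :: "nat \<Rightarrow> real"
  shows "(\<And>j. 0 \<le> c j) \<Longrightarrow> 0 \<le> grid_step n c x"
  unfolding grid_step_def by (intro sum_nonneg) auto

lemma grid_step_ge:
  fixes c :: "nat \<Rightarrow> real"
  assumes "\<And>j. 0 \<le> c j" "j < n" "x \<in> cell n j"
  shows "c j \<le> grid_step n c x"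
proof -
  have "(\<Sum>i\<in>{j}. if x \<in> cell n i then c i else 0) \<le> (\<Sum>i<n. if x \<in> cell n i then c i else 0)"
    using assms by (intro sum_mono2) auto
  then show ?thesis using assms(3) by (simp add: grid_step_def)
qed

lemma L2_01_grid_step:
  fixes c :: "nat \<Rightarrow> 'a::euclidean_space"
  shows "L2_01 (grid_step n c)"
proof -
  define B where "B = (\<Sum>j<n. norm (c j))"
  have bound: "norm (grid_step n c x) \<le> B" for x
    using norm_grid_step_le[of n c x] unfolding B_def grid_step_def
    by (rule order_trans) (intro sum_mono, auto)
  have meas: "grid_step n c \<in> borel_measurable (lebesgue_on {0..1})"
    using grid_step_integrable integrable_imp_measurable by blast
  have "grid_step n c absolutely_integrable_on {0..1}"
    using integrable_const_ivl[of B] bound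
    by (intro measurable_bounded_by_integrable_imp_absolutely_integrable[OF meas]) auto
  moreover have "(\<lambda>x. (norm (grid_step n c x))\<^sup>2) \<in> borel_measurable (lebesgue_on {0..1})"
    using meas by measurable
  then have "(\<lambda>x. (norm (grid_step n c x))\<^sup>2) integrable_on {0..1}"
    by (rule measurable_bounded_by_integrable_imp_integrable[OF _ integrable_const_ivl[of "B\<^sup>2"]])
      (auto simp: bound power_mono)
  ultimately show ?thesis unfolding L2_01_def by blast
qed

lemma integral_mult_grid_step:
  fixes \<phi> :: "real \<Rightarrow> real" and c :: "nat \<Rightarrow> real"
  assumes \<phi>: "\<phi> integrable_on {0..1}"
  shows "(\<lambda>x. \<phi> x * grid_step n c x) integrable_on {u..v}"
    and "integral {0..1} (\<lambda>x. \<phi> x * grid_step n c x) = (\<Sum>j<n. c j * integral (cell n j) \<phi>)"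
proof -
  have eq: "(\<lambda>x. \<phi> x * grid_step n c x) = (\<lambda>x. \<Sum>j<n. c j *\<^sub>R (if x \<in> cell n j then \<phi> x else 0))"
    by (auto simp: grid_step_def sum_distrib_left intro!: sum.cong)
  have piece: "(\<lambda>x. if x \<in> cell n j then \<phi> x else 0) integrable_on {u..v}" if "j < n" for u v j
  proof -
    have "cell n j \<inter> {u..v} \<subseteq> {0..1}" using cell_subset_unit_interval[OF that] by auto
    then have "\<phi> integrable_on (cell n j \<inter> {u..v})"
      unfolding Int_atLeastAtMost using \<phi> by (metis integrable_on_subinterval box_real(2))
    then show ?thesis by (simp only: integrable_restrict_Int)
  qed
  show "(\<lambda>x. \<phi> x * grid_step n c x) integrable_on {u..v}"
    unfolding eq by (intro integrable_sum integrable_cmul piece) auto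
  have "integral {0..1} (\<lambda>x. \<phi> x * grid_step n c x)
      = (\<Sum>j<n. c j *\<^sub>R integral {0..1} (\<lambda>x. if x \<in> cell n j then \<phi> x else 0))"
    unfolding eq
    by (subst integral_sum)
      (auto simp del: atLeastAtMost_iff real_scaleR_def intro: piece integrable_cmul)
  also have "\<dots> = (\<Sum>j<n. c j * integral (cell n j) \<phi>)"
  proof (intro sum.cong refl)
    fix j assume "j \<in> {..<n}"
    then have "cell n j \<inter> {0..1} = cell n j" using cell_subset_unit_interval by auto
    then show "c j *\<^sub>R integral {0..1} (\<lambda>x. if x \<in> cell n j then \<phi> x else 0)
        = c j * integral (cell n j) \<phi>"
      by (simp only: integral_restrict_Int real_scaleR_def)
  qed
  finally show "integral {0..1} (\<lambda>x. \<phi> x * grid_step n c x) = (\<Sum>j<n. c j * integral (cell n j) \<phi>)" .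
qed

section \<open>The projection onto \<open>H\<^sub>n\<close>\<close>

definition grid_slope :: "nat \<Rightarrow> (real \<Rightarrow> 'a::real_normed_vector) \<Rightarrow> nat \<Rightarrow> 'a" where
  "grid_slope n h i = real n *\<^sub>R (h (grid n (Suc i)) - h (grid n i))"

text \<open>The piecewise linear interpolation of \<open>h\<close> at the grid points, written as an indefinite
  integral so that it is visibly an element of \<open>H10\<close>.\<close>
definition interpolant :: "nat \<Rightarrow> (real \<Rightarrow> 'a::euclidean_space) \<Rightarrow> real \<Rightarrow> 'a" where
  "interpolant n h t = (if t \<in> {0..1} then integral {0..t} (grid_step n (grid_slope n h)) else 0)"

lemma interpolant_H10: "interpolant n h \<in> H10"
  by (rule H10I[OF L2_01_grid_step]) (auto simp: interpolant_def)

lemma interpolant_on_cell: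
  assumes n: "0 < n" and h0: "h 0 = 0" and k: "k < n" and t: "t \<in> cell n k"
  shows "interpolant n h t = h (grid n k) + (t - grid n k) *\<^sub>R grid_slope n h k"
proof -
  have "t \<in> {0..1}" using t cell_subset_unit_interval[OF k] by auto
  then have "interpolant n h t
      = (\<Sum>j<k. grid_slope n h j /\<^sub>R real n) + (t - grid n k) *\<^sub>R grid_slope n h k"
    by (simp add: interpolant_def integral_grid_step_initial[OF n k t])
  also have "(\<Sum>j<k. grid_slope n h j /\<^sub>R real n) = (\<Sum>j<k. h (grid n (Suc j)) - h (grid n j))"
    using n by (simp add: grid_slope_def)
  also have "\<dots> = h (grid n k)"
    using h0 sum_lessThan_telescope[of "\<lambda>j. h (grid n j)" k] by simp
  finally show ?thesis .
qed

lemma interpolant_grid: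
  assumes n: "0 < n" and h0: "h 0 = 0" and k: "k \<le> n"
  shows "interpolant n h (grid n k) = h (grid n k)"
proof (cases "k < n")
  case True
  then show ?thesis
    using interpolant_on_cell[of n h k "grid n k"] n h0 grid_mono[of k "Suc k" n] by simp
next
  case False
  then have k_eq: "k = Suc (n - 1)" using k n by simp
  then have "interpolant n h (grid n k)
      = h (grid n (n - 1)) + (grid n k - grid n (n - 1)) *\<^sub>R grid_slope n h (n - 1)"
    using interpolant_on_cell[of n h "n - 1" "grid n k"] h0 grid_mono[of "n - 1" k n] n by simp
  also have "\<dots> = h (grid n k)"
    using grid_Suc_diff[OF n, of "n - 1"] k_eq n by (simp add: grid_slope_def)
  finally show ?thesis .
qed

lemma interpolant_Hn:
  assumes n: "0 < n" and h0: "h 0 = 0"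
  shows "interpolant n h \<in> Hn n"
  unfolding Hn_iff
proof (intro conjI allI impI interpolant_H10)
  fix i assume i: "i < n"
  show "\<exists>a b. \<forall>t\<in>cell n i. interpolant n h t = a + t *\<^sub>R b"
    by (intro exI[of _ "h (grid n i) - grid n i *\<^sub>R grid_slope n h i"] exI[of _ "grid_slope n h i"])
      (auto simp: interpolant_on_cell[of n h i, OF n h0 i] algebra_simps)
qed

lemma H_inner_piecewise_affine:
  fixes f k :: "real \<Rightarrow> 'a::euclidean_space" and t :: "nat \<Rightarrow> real"
  assumes f: "f \<in> H10" and k: "k \<in> H10"
    and mono: "\<And>i. i < m \<Longrightarrow> t i \<le> t (Suc i)" and t0: "t 0 = 0" and tm: "t m = 1"
    and aff: "\<And>i x. i < m \<Longrightarrow> x \<in> {t i..t (Suc i)} \<Longrightarrow> k x = A i + x *\<^sub>R B i"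
  shows "H_inner f k = (\<Sum>i<m. (f (t (Suc i)) - f (t i)) \<bullet> B i)"
proof -
  define F K where "F = H_deriv f" and "K = H_deriv k"
  have piece: "((\<lambda>x. F x \<bullet> K x) has_integral ((f (t (Suc i)) - f (t i)) \<bullet> B i)) {t i..t (Suc i)}"
    if i: "i < m" for i
  proof -
    have ti: "0 \<le> t i" "t i \<le> t (Suc i)" "t (Suc i) \<le> 1"
      using chain_in_unit_interval[of m t, OF mono t0 tm] mono i by auto
    \<comment> \<open>\<open>K\<close> is chosen by \<open>SOME\<close>, so it equals the slope \<open>B i\<close> only almost everywhere\<close>
    have "negligible {x \<in> {t i..t (Suc i)}. K x \<noteq> B i}"
    proof (rule negligible_neq_const_if_indefinite_integral_linear)
      show "K absolutely_integrable_on {t i..t (Suc i)}"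
        unfolding K_def using L2_01_subinterval(1)[OF H10D(1)[OF k]] ti by auto
      fix x assume x: "x \<in> {t i..t (Suc i)}"
      then have "integral {t i..x} K = k x - k (t i)"
        unfolding K_def using H10_increment[OF k] ti by auto
      also have "\<dots> = (x - t i) *\<^sub>R B i"
        using aff[OF i, of x] aff[OF i, of "t i"] x ti by (auto simp: algebra_simps)
      finally show "integral {t i..x} K = (x - t i) *\<^sub>R B i" .
    qed
    moreover have F_int:
      "((\<lambda>x. F x \<bullet> B i) has_integral ((f (t (Suc i)) - f (t i)) \<bullet> B i)) {t i..t (Suc i)}"
    proof -
      have "F integrable_on {t i..t (Suc i)}"
        unfolding F_def using L2_01_subinterval(2)[OF H10D(1)[OF f]] ti by auto
      then have "(F has_integral (f (t (Suc i)) - f (t i))) {t i..t (Suc i)}"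
        unfolding F_def using H10_increment[OF f] ti by (metis integrable_integral)
      then show ?thesis
        using has_integral_linear[OF _ bounded_linear_inner_left] by (auto simp: o_def)
    qed
    ultimately show ?thesis by (intro has_integral_spike[OF _ _ F_int]) auto
  qed
  have "H_inner f k = integral {t 0..t m} (\<lambda>x. F x \<bullet> K x)"
    unfolding H_inner_def F_def K_def t0 tm ..
  also have "\<dots> = (\<Sum>i<m. integral {t i..t (Suc i)} (\<lambda>x. F x \<bullet> K x))"
    using piece mono by (intro integral_combine_chain) auto
  also have "\<dots> = (\<Sum>i<m. (f (t (Suc i)) - f (t i)) \<bullet> B i)"
    using piece by (intro sum.cong) (auto intro: integral_unique)
  finally show ?thesis .
qed

lemma H_inner_Hn:
  assumes "0 < n" "f \<in> H10" "k \<in> H10"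
    and "\<And>i x. i < n \<Longrightarrow> x \<in> cell n i \<Longrightarrow> k x = A i + x *\<^sub>R B i"
  shows "H_inner f k = (\<Sum>i<n. (f (grid n (Suc i)) - f (grid n i)) \<bullet> B i)"
  using H_inner_piecewise_affine[of f k n "grid n" A B] assms grid_mono grid_self by auto

lemma H_inner_Hn_eq_0_if_grid_zero:
  assumes n: "0 < n" and f: "f \<in> H10" and zero: "\<And>j. j \<le> n \<Longrightarrow> f (grid n j) = 0"
    and k: "k \<in> Hn n"
  shows "H_inner f k = 0"
proof -
  obtain A B where "\<And>i x. i < n \<Longrightarrow> x \<in> cell n i \<Longrightarrow> k x = A i + x *\<^sub>R B i"
    using Hn_piecewise_affineE[OF k] by blast
  then have "H_inner f k = (\<Sum>i<n. (f (grid n (Suc i)) - f (grid n i)) \<bullet> B i)"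
    using k n f by (intro H_inner_Hn) (auto simp: Hn_iff)
  also have "\<dots> = 0" using zero by (intro sum.neutral) auto
  finally show ?thesis .
qed

lemma H10_piecewise_constant_eq_0:
  assumes n: "0 < n" and d: "d \<in> H10" and const: "\<And>i x. i < n \<Longrightarrow> x \<in> cell n i \<Longrightarrow> d x = A i"
  shows "d = (\<lambda>_. 0)"
proof
  have ends: "grid n i \<in> cell n i" "grid n (Suc i) \<in> cell n i" for i
    using grid_mono[of i "Suc i" n] by auto
  have grid_zero: "d (grid n j) = 0" if "j \<le> n" for j
    using that
  proof (induction j)
    case 0
    then show ?case using H10_zero[OF d] by simp
  next
    case (Suc j)
    then show ?case using const[of j "grid n j"] const[of j "grid n (Suc j)"] ends by simp
  qed
  fix x
  show "d x = 0"
  proof (cases "x \<in> {0..1}")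
    case True
    then obtain i where "i < n" "x \<in> cell n i" using cell_cover[OF n] by blast
    then show ?thesis using const[of i x] const[of i "grid n i"] ends grid_zero[of i] by simp
  qed (use H10D(3)[OF d] in auto)
qed

lemma orthogonal_Hn_eq_interpolant:
  fixes h :: "real \<Rightarrow> 'a::euclidean_space"
  assumes n: "0 < n" and h: "h \<in> H10" and p: "p \<in> Hn n"
    and orth: "\<forall>k\<in>Hn n. H_inner (\<lambda>t. h t - p t) k = 0"
  shows "p = interpolant n h"
proof -
  define d where "d = (\<lambda>t. interpolant n h t - p t)"
  have d_Hn: "d \<in> Hn n"
    unfolding d_def using interpolant_Hn[of n h, OF n H10_zero[OF h]] p by (rule Hn_diff)
  then have d_H10: "d \<in> H10" by (simp add: Hn_iff)
  obtain A B where d_aff: "\<And>i t. i < n \<Longrightarrow> t \<in> cell n i \<Longrightarrow> d t = A i + t *\<^sub>R B i"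
    using Hn_piecewise_affineE[OF d_Hn] by blast
  have on_grid: "h (grid n j) - p (grid n j) = d (grid n j)" if "j \<le> n" for j
    using interpolant_grid[of n h, OF n H10_zero[OF h] that] by (simp add: d_def)
  have "0 = H_inner (\<lambda>t. h t - p t) d" using orth d_Hn by auto
  also have "\<dots> = (\<Sum>i<n. ((h (grid n (Suc i)) - p (grid n (Suc i)))
      - (h (grid n i) - p (grid n i))) \<bullet> B i)"
    using H10_diff[OF h] p d_H10 d_aff by (intro H_inner_Hn[OF n]) (auto simp: Hn_iff)
  also have "\<dots> = (\<Sum>i<n. (B i \<bullet> B i) / real n)"
    using on_grid increment_affine_on_cell[OF n d_aff]
    by (intro sum.cong) (auto simp: inverse_eq_divide)
  finally have "(\<Sum>i<n. (B i \<bullet> B i) / real n) = 0" by simp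
  then have "B i = 0" if "i < n" for i
    using that n by (subst (asm) sum_nonneg_eq_0_iff) auto
  then have "d = (\<lambda>_. 0)"
    using d_aff by (intro H10_piecewise_constant_eq_0[OF n d_H10]) auto
  then show ?thesis unfolding d_def by (auto simp: fun_eq_iff)
qed

lemma H_proj_Hn:
  fixes h :: "real \<Rightarrow> 'a::euclidean_space"
  assumes n: "0 < n" and h: "h \<in> H10"
  shows "H_proj (Hn n) h = interpolant n h"
  unfolding H_proj_def
proof (rule the_equality)
  have "H_inner (\<lambda>t. h t - interpolant n h t) k = 0" if "k \<in> Hn n" for k
    using interpolant_grid[of n h, OF n H10_zero[OF h]] H10_diff[OF h interpolant_H10] that
    by (intro H_inner_Hn_eq_0_if_grid_zero[OF n]) auto
  then show "interpolant n h \<in> Hn n \<and> (\<forall>k\<in>Hn n. H_inner (\<lambda>t. h t - interpolant n h t) k = 0)"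
    using interpolant_Hn[of n h, OF n H10_zero[OF h]] by blast
qed (use orthogonal_Hn_eq_interpolant[OF n h] in blast)

section \<open>The \<open>q\<close>-variation of the interpolation error\<close>

definition interpolation_error :: "nat \<Rightarrow> (real \<Rightarrow> 'a::euclidean_space) \<Rightarrow> real \<Rightarrow> 'a" where
  "interpolation_error n h t = h t - interpolant n h t"

lemma interpolation_error_grid:
  "0 < n \<Longrightarrow> h \<in> H10 \<Longrightarrow> k \<le> n \<Longrightarrow> interpolation_error n h (grid n k) = 0"
  using interpolant_grid[of n h k] H10_zero[of h] by (simp add: interpolation_error_def)

text \<open>This is the \<open>\<phi> = |h'| + |(I\<^sub>n h)'|\<close> of the proof idea; it dominates the derivative of the
  error \<open>h - I\<^sub>n h\<close>.\<close>
definition error_density :: "nat \<Rightarrow> (real \<Rightarrow> 'a::euclidean_space) \<Rightarrow> real \<Rightarrow> real" where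
  "error_density n h x = norm (H_deriv h x) + grid_step n (\<lambda>j. norm (grid_slope n h j)) x"

definition cell_mass :: "nat \<Rightarrow> (real \<Rightarrow> 'a::euclidean_space) \<Rightarrow> nat \<Rightarrow> real" where
  "cell_mass n h j = integral (cell n j) (error_density n h)"

text \<open>Weighting \<open>\<phi>\<close> by \<open>m\<^sub>j\<^sup>q\<^sup>-\<^sup>1\<close> on cell \<open>j\<close> turns \<open>(\<integral>\<^sub>x\<^sup>y \<phi>)\<^sup>q\<close>, for
  \<open>[x,y]\<close> inside a cell, into something dominated by an integral, hence additive over partitions.\<close>
definition weighted_density :: "real \<Rightarrow> nat \<Rightarrow> (real \<Rightarrow> 'a::euclidean_space) \<Rightarrow> real \<Rightarrow> real" where
  "weighted_density q n h x =
    error_density n h x * grid_step n (\<lambda>j. cell_mass n h j powr (q - 1)) x"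

lemma error_density_nonneg: "0 \<le> error_density n h x"
  unfolding error_density_def by (simp add: add_nonneg_nonneg grid_step_nonneg)

lemma error_density_integrable:
  assumes "h \<in> H10" "0 \<le> u" "v \<le> 1"
  shows "error_density n h integrable_on {u..v}"
  unfolding error_density_def[abs_def]
  using L2_01_subinterval(3)[OF H10D(1)[OF assms(1)] assms(2,3)]
  by (intro integrable_add grid_step_integrable)

lemma weighted_density_nonneg: "0 \<le> weighted_density q n h x"
  unfolding weighted_density_def by (simp add: error_density_nonneg grid_step_nonneg)

lemma weighted_density_integrable:
  "h \<in> H10 \<Longrightarrow> weighted_density q n h integrable_on {u..v}"
  unfolding weighted_density_def[abs_def]
  by (rule integral_mult_grid_step(1)[OF error_density_integrable]) auto

lemma cell_mass_nonneg: "h \<in> H10 \<Longrightarrow> j < n \<Longrightarrow> 0 \<le> cell_mass n h j"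
  unfolding cell_mass_def using grid_nonneg[of n j] grid_le_1[of "Suc j" n]
  by (intro integral_nonneg error_density_integrable error_density_nonneg) auto

lemma integral_weighted_density:
  assumes h: "h \<in> H10"
  shows "integral {0..1} (weighted_density q n h) = (\<Sum>j<n. cell_mass n h j powr q)"
proof -
  have "integral {0..1} (weighted_density q n h)
      = (\<Sum>j<n. cell_mass n h j powr (q - 1) * cell_mass n h j)"
    unfolding weighted_density_def[abs_def] cell_mass_def
    by (rule integral_mult_grid_step(2)[OF error_density_integrable[OF h]]) auto
  also have "\<dots> = (\<Sum>j<n. cell_mass n h j powr q)"
  proof (intro sum.cong refl)
    fix j assume "j \<in> {..<n}"
    then have "0 \<le> cell_mass n h j" using cell_mass_nonneg[OF h] by simp
    then show "cell_mass n h j powr (q - 1) * cell_mass n h j = cell_mass n h j powr q"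
      using powr_add[of "cell_mass n h j" "q - 1" 1] by (cases "cell_mass n h j = 0") simp_all
  qed
  finally show ?thesis .
qed

lemma interpolation_error_increment_le:
  fixes h :: "real \<Rightarrow> 'a::euclidean_space"
  assumes h: "h \<in> H10" and st: "0 \<le> s" "s \<le> t" "t \<le> 1"
  shows "norm (interpolation_error n h t - interpolation_error n h s)
      \<le> integral {s..t} (error_density n h)"
proof -
  let ?F = "H_deriv h" and ?P = "grid_step n (grid_slope n h)"
  have F: "?F integrable_on {s..t}" using L2_01_subinterval(2)[OF H10D(1)[OF h]] st by auto
  have "interpolation_error n h t - interpolation_error n h s
      = (h t - h s) - (interpolant n h t - interpolant n h s)"
    by (simp add: interpolation_error_def algebra_simps)
  also have "\<dots> = integral {s..t} ?F - integral {s..t} ?P"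
    using H10_increment[OF h st] st
      integral_Icc_diff[OF grid_step_integrable, of 0 s t n "grid_slope n h"]
    by (simp add: interpolant_def)
  also have "\<dots> = integral {s..t} (\<lambda>x. ?F x - ?P x)"
    using integral_diff[OF F grid_step_integrable] by simp
  finally have "norm (interpolation_error n h t - interpolation_error n h s)
      = norm (integral {s..t} (\<lambda>x. ?F x - ?P x))" by simp
  also have "\<dots> \<le> integral {s..t} (error_density n h)"
  proof (rule integral_norm_bound_integral)
    show "(\<lambda>x. ?F x - ?P x) integrable_on {s..t}"
      using F grid_step_integrable by (rule integrable_diff)
    show "error_density n h integrable_on {s..t}" using error_density_integrable[OF h] st by auto
    fix x
    have "norm (?F x - ?P x) \<le> norm (?F x) + norm (?P x)" by (rule norm_triangle_ineq4)
    then show "norm (?F x - ?P x) \<le> error_density n h x"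
      using norm_grid_step_le[of n "grid_slope n h" x] by (simp add: error_density_def)
  qed
  finally show ?thesis .
qed

lemma powr_integral_le_within_cell:
  fixes h :: "real \<Rightarrow> 'a::euclidean_space"
  assumes h: "h \<in> H10" and q: "1 \<le> q" and j: "j < n"
    and xy: "grid n j \<le> x" "x \<le> y" "y \<le> grid n (Suc j)"
    and su: "0 \<le> s" "s \<le> x" "y \<le> u" "u \<le> 1"
  shows "(integral {x..y} (error_density n h)) powr q \<le> integral {s..u} (weighted_density q n h)"
proof -
  have cell: "0 \<le> grid n j" "grid n (Suc j) \<le> 1" using grid_nonneg grid_le_1 j by auto
  define A where "A = integral {x..y} (error_density n h)"
  have \<phi>: "error_density n h integrable_on {x..y}"
    using error_density_integrable[OF h] xy cell by auto
  have A: "0 \<le> A" unfolding A_def using \<phi> error_density_nonneg by (intro integral_nonneg) auto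
  have "A \<le> cell_mass n h j" unfolding A_def cell_mass_def
    using xy cell error_density_integrable[OF h] error_density_nonneg
    by (intro integral_subset_le) auto
  then have "A powr (q - 1) \<le> cell_mass n h j powr (q - 1)" using A q by (intro powr_mono2) auto
  then have weight: "A powr (q - 1) \<le> grid_step n (\<lambda>j. cell_mass n h j powr (q - 1)) z"
    if "z \<in> {x..y}" for z
    using grid_step_ge[of "\<lambda>j. cell_mass n h j powr (q - 1)" j n z] j xy that by auto
  have "A powr q = integral {x..y} (\<lambda>z. error_density n h z * A powr (q - 1))"
    using A powr_add[of A 1 "q - 1"] by (cases "A = 0") (simp_all add: A_def)
  also have "\<dots> \<le> integral {x..y} (weighted_density q n h)"
    unfolding weighted_density_def
    using integrable_cmul[OF \<phi>, of "A powr (q - 1)"]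
      weighted_density_integrable[OF h, unfolded weighted_density_def[abs_def]]
      weight error_density_nonneg
    by (intro integral_le mult_left_mono) (auto simp: mult.commute)
  also have "\<dots> \<le> integral {s..u} (weighted_density q n h)"
    using xy su weighted_density_integrable[OF h] weighted_density_nonneg
    by (intro integral_subset_le) auto
  finally show ?thesis unfolding A_def .
qed

lemma interpolation_error_increment_powr_le:
  fixes h :: "real \<Rightarrow> 'a::euclidean_space"
  assumes n: "0 < n" and h: "h \<in> H10" and q: "1 \<le> q" and su: "0 \<le> s" "s \<le> u" "u \<le> 1"
  shows "norm (interpolation_error n h u - interpolation_error n h s) powr q
      \<le> 2 powr q * integral {s..u} (weighted_density q n h)"
proof -
  let ?e = "interpolation_error n h" and ?I = "\<lambda>x y. integral {x..y} (error_density n h)"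
  define W where "W = integral {s..u} (weighted_density q n h)"
  obtain i where i: "i < n" "s \<in> cell n i" using cell_cover[OF n, of s] su by auto
  obtain j where j: "j < n" "u \<in> cell n j" using cell_cover[OF n, of u] su by auto
  have W: "0 \<le> W" unfolding W_def
    using weighted_density_integrable[OF h] weighted_density_nonneg su
    by (intro integral_nonneg) auto
  have I: "0 \<le> ?I x y" if "0 \<le> x" "y \<le> 1" for x y
    using error_density_integrable[OF h that] error_density_nonneg by (intro integral_nonneg) auto
  obtain A B where AB: "0 \<le> A" "0 \<le> B" "norm (?e u - ?e s) \<le> A + B" "A powr q \<le> W" "B powr q \<le> W"
  proof (cases "j \<le> i")
    case True
    then have "u \<le> grid n (Suc i)" using j grid_mono[of "Suc j" "Suc i" n] by auto
    then show ?thesis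
      using that[of "?I s u" 0] interpolation_error_increment_le[OF h su] I[of s u] W su i q
        powr_integral_le_within_cell[OF h q i(1), of s u s u]
      by (auto simp: W_def)
  next
    case False
    define a b where "a = grid n (Suc i)" and "b = grid n j"
    have sabu: "s \<le> a" "a \<le> b" "b \<le> u" "a \<le> 1"
      using i j False grid_mono[of "Suc i" j n] grid_le_1[of "Suc i" n] by (auto simp: a_def b_def)
    have "?e a = 0" "?e b = 0"
      using interpolation_error_grid[OF n h] i j by (auto simp: a_def b_def)
    then have "norm (?e u - ?e s) \<le> norm (?e u - ?e b) + norm (?e a - ?e s)"
      using norm_triangle_ineq[of "?e u - ?e b" "?e a - ?e s"] by simp
    moreover have "norm (?e u - ?e b) \<le> ?I b u" "norm (?e a - ?e s) \<le> ?I s a"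
      using interpolation_error_increment_le[OF h] sabu su by auto
    ultimately show ?thesis
      using that[of "?I s a" "?I b u"] I[of s a] I[of b u] sabu su i j
        powr_integral_le_within_cell[OF h q i(1), of s a s u]
        powr_integral_le_within_cell[OF h q j(1), of b u s u]
      by (auto simp: W_def a_def b_def)
  qed
  have "norm (?e u - ?e s) powr q \<le> (A + B) powr q" using AB q by (intro powr_mono2) auto
  also have "\<dots> \<le> 2 powr q * W" using AB q by (intro powr_add_le_of_powr_le) auto
  finally show ?thesis unfolding W_def .
qed

lemma sum_interpolation_error_powr_le:
  fixes h :: "real \<Rightarrow> 'a::euclidean_space" and t :: "nat \<Rightarrow> real"
  assumes n: "0 < n" and h: "h \<in> H10" and q: "1 \<le> q"
    and mono: "\<And>i. i < m \<Longrightarrow> t i \<le> t (Suc i)" and t0: "t 0 = 0" and tm: "t m = 1"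
  shows "(\<Sum>i<m. norm (interpolation_error n h (t (Suc i)) - interpolation_error n h (t i)) powr q)
      \<le> 2 powr q * (\<Sum>j<n. cell_mass n h j powr q)"
proof -
  have "(\<Sum>i<m. norm (interpolation_error n h (t (Suc i)) - interpolation_error n h (t i)) powr q)
      \<le> (\<Sum>i<m. 2 powr q * integral {t i..t (Suc i)} (weighted_density q n h))"
    using chain_in_unit_interval[of m t, OF mono t0 tm] mono
    by (intro sum_mono interpolation_error_increment_powr_le[OF n h q]) auto
  also have "\<dots> = 2 powr q * integral {t 0..t m} (weighted_density q n h)"
    using integral_combine_chain(2)[of m t, OF mono weighted_density_integrable[OF h]]
    by (simp add: sum_distrib_left)
  also have "\<dots> = 2 powr q * (\<Sum>j<n. cell_mass n h j powr q)"
    using integral_weighted_density[OF h] t0 tm by simp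
  finally show ?thesis .
qed

lemma cell_mass_le:
  fixes h :: "real \<Rightarrow> 'a::euclidean_space"
  assumes n: "0 < n" and h: "h \<in> H10" and j: "j < n"
  shows "cell_mass n h j \<le> 2 * sqrt (integral (cell n j) (\<lambda>x. (norm (H_deriv h x))\<^sup>2) / real n)"
proof -
  let ?F = "H_deriv h"
  have cell: "0 \<le> grid n j" "grid n j < grid n (Suc j)" "grid n (Suc j) \<le> 1"
    using grid_nonneg grid_less_Suc[OF n] grid_le_1[of "Suc j" n] j by auto
  note F = L2_01_subinterval[OF H10D(1)[OF h] cell(1) cell(3)]
  have "cell_mass n h j = integral (cell n j) (\<lambda>x. norm (?F x))
      + integral (cell n j) (grid_step n (\<lambda>j. norm (grid_slope n h j)))"
    unfolding cell_mass_def error_density_def[abs_def] using F(3)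
    by (intro integral_add grid_step_integrable)
  also have "integral (cell n j) (grid_step n (\<lambda>j. norm (grid_slope n h j)))
      = norm (integral (cell n j) ?F)"
    using integral_grid_step_cell[OF n j, of "\<lambda>j. norm (grid_slope n h j)"] n
      H10_increment[OF h cell(1) less_imp_le[OF cell(2)] cell(3)]
    by (simp add: grid_slope_def)
  also have "\<dots> \<le> integral (cell n j) (\<lambda>x. norm (?F x))"
    using F by (intro integral_norm_bound_integral) auto
  also have "integral (cell n j) (\<lambda>x. norm (?F x))
      \<le> sqrt (1 / real n) * sqrt (integral (cell n j) (\<lambda>x. (norm (?F x))\<^sup>2))"
    using Cauchy_Schwarz_integral_Icc[OF cell(2), of "\<lambda>x. norm (?F x)"] F grid_Suc_diff[OF n]
    by simp
  finally show ?thesis by (simp add: real_sqrt_divide)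
qed

lemma cell_mass_powr_le:
  fixes h :: "real \<Rightarrow> 'a::euclidean_space"
  assumes n: "0 < n" and h: "h \<in> H10" and j: "j < n" and q: "0 < q"
  shows "cell_mass n h j powr q
      \<le> 2 powr q / real n powr (q / 2)
        * integral (cell n j) (\<lambda>x. (norm (H_deriv h x))\<^sup>2) powr (q / 2)"
proof -
  define G where "G = integral (cell n j) (\<lambda>x. (norm (H_deriv h x))\<^sup>2)"
  have "0 \<le> G"
    unfolding G_def using j
      L2_01_subinterval(4)[OF H10D(1)[OF h] grid_nonneg grid_le_1[of "Suc j" n]]
    by (intro integral_nonneg) auto
  have "cell_mass n h j powr q \<le> (2 * sqrt (G / real n)) powr q"
    using cell_mass_le[OF n h j] cell_mass_nonneg[OF h j] q unfolding G_def
    by (intro powr_mono2) auto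
  also have "\<dots> = 2 powr q / real n powr (q / 2) * G powr (q / 2)"
    using \<open>0 \<le> G\<close> n by (simp add: powr_mult powr_divide powr_half_sqrt[symmetric] powr_powr)
  finally show ?thesis unfolding G_def .
qed

lemma sum_cell_mass_powr_le:
  fixes h :: "real \<Rightarrow> 'a::euclidean_space"
  assumes n: "0 < n" and h: "h \<in> H10" and q: "0 < q" "q \<le> 2"
  shows "(\<Sum>j<n. cell_mass n h j powr q) \<le> 2 powr q * real n powr (1 - q) * H_norm h powr q"
proof -
  define G where "G j = integral (cell n j) (\<lambda>x. (norm (H_deriv h x))\<^sup>2)" for j
  have G: "0 \<le> G j" if "j < n" for j
    unfolding G_def using that
      L2_01_subinterval(4)[OF H10D(1)[OF h] grid_nonneg grid_le_1[of "Suc j" n]]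
    by (intro integral_nonneg) auto
  have "(\<Sum>j<n. cell_mass n h j powr q) \<le> (\<Sum>j<n. 2 powr q / real n powr (q / 2) * G j powr (q / 2))"
    unfolding G_def using cell_mass_powr_le[OF n h _ q(1)] by (intro sum_mono) auto
  also have "\<dots> = 2 powr q / real n powr (q / 2) * (\<Sum>j<n. G j powr (q / 2))"
    by (simp add: sum_distrib_left)
  also have "(\<Sum>j<n. G j powr (q / 2)) \<le> real n powr (1 - q / 2) * (\<Sum>j<n. G j) powr (q / 2)"
    using sum_powr_le_card_powr_sum[of "{..<n}" G "q / 2"] G q by simp
  also have "(\<Sum>j<n. G j) = integral {0..1} (\<lambda>x. (norm (H_deriv h x))\<^sup>2)"
    using integral_combine_chain(2)[of n "grid n" "\<lambda>x. (norm (H_deriv h x))\<^sup>2"]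
      L2_01_subinterval(4)[OF H10D(1)[OF h] grid_nonneg grid_le_1] grid_mono grid_self[OF n]
    by (simp add: G_def)
  also have "\<dots> powr (q / 2) = H_norm h powr q"
    using H_norm_nonneg[of h] unfolding H_norm_def
    by (simp add: powr_half_sqrt[symmetric] powr_powr)
  finally have "(\<Sum>j<n. cell_mass n h j powr q)
      \<le> 2 powr q * (real n powr (1 - q / 2) / real n powr (q / 2)) * H_norm h powr q"
    by (simp add: mult_left_mono divide_right_mono)
  also have "real n powr (1 - q / 2) / real n powr (q / 2) = real n powr (1 - q)"
    using n powr_diff[of "real n" "1 - q / 2" "q / 2"] by simp
  finally show ?thesis .
qed

lemma qvar_pow_nonneg: "0 \<le> qvar_pow q f"
  unfolding qvar_pow_def
  by (rule SUP_upper2[of "(1, \<lambda>i. if i = 0 then 0 else 1)"]) (auto intro: sum_nonneg)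

lemma qvar_norm_le:
  assumes q: "0 < q" and K: "0 \<le> K" and le: "qvar_pow q f \<le> ereal (K powr q)"
  shows "qvar_norm q f \<le> ereal K"
proof -
  obtain x where x: "qvar_pow q f = ereal x" "0 \<le> x" "x \<le> K powr q"
    using qvar_pow_nonneg[of q f] le by (cases "qvar_pow q f") auto
  then have "x powr (1 / q) \<le> (K powr q) powr (1 / q)" using q by (intro powr_mono2) auto
  also have "\<dots> = K" using q K by (simp add: powr_powr)
  finally show ?thesis using x(1) by (simp add: qvar_norm_def)
qed

lemma qvar_pow_interpolation_error_le:
  fixes h :: "real \<Rightarrow> 'a::euclidean_space"
  assumes n: "0 < n" and h: "h \<in> H10" and q: "1 \<le> q" "q \<le> 2"
  shows "qvar_pow q (interpolation_error n h)
      \<le> ereal ((4 * real n powr (1 / q - 1) * H_norm h) powr q)"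
  unfolding qvar_pow_def
proof (rule SUP_least)
  fix mt :: "nat \<times> (nat \<Rightarrow> real)"
  assume "mt \<in> {(m, t). t 0 = 0 \<and> t m = 1 \<and> (\<forall>i<m. t i \<le> t (Suc i))}"
  then obtain m t where mt: "mt = (m, t)" "t 0 = 0" "t m = 1" "\<And>i. i < m \<Longrightarrow> t i \<le> t (Suc i)"
    by auto
  have "(\<Sum>i<m. norm (interpolation_error n h (t (Suc i)) - interpolation_error n h (t i)) powr q)
      \<le> 2 powr q * (\<Sum>j<n. cell_mass n h j powr q)"
    using sum_interpolation_error_powr_le[OF n h q(1) mt(4) mt(2,3)] .
  also have "\<dots> \<le> 2 powr q * (2 powr q * real n powr (1 - q) * H_norm h powr q)"
    using sum_cell_mass_powr_le[OF n h] q by (intro mult_left_mono) auto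
  also have "\<dots> = (4 * real n powr (1 / q - 1) * H_norm h) powr q"
  proof -
    have "(4::real) powr q = 2 powr q * 2 powr q" using powr_mult[of 2 2 q] by simp
    moreover have "(1 / q - 1) * q = 1 - q" using q by (simp add: field_simps)
    then have "(real n powr (1 / q - 1)) powr q = real n powr (1 - q)" by (simp add: powr_powr)
    ultimately show ?thesis using H_norm_nonneg[of h] by (simp add: powr_mult)
  qed
  finally show "ereal (\<Sum>i<fst mt. norm (interpolation_error n h (snd mt (Suc i))
      - interpolation_error n h (snd mt i)) powr q)
      \<le> ereal ((4 * real n powr (1 / q - 1) * H_norm h) powr q)"
    using mt(1) by simp
qed

theorem lemma7p3:
  fixes q :: real
  assumes "1 < q" and "q < 2"
  shows "\<exists>C. \<forall>n::nat. n \<ge> 1 \<longrightarrow>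
           eps_q q (Hn n :: (real \<Rightarrow> 'a::euclidean_space) set) \<le> ereal (C * real n powr (1 / q - 1))"
proof (intro exI allI impI)
  fix n :: nat
  assume "n \<ge> 1"
  then have n: "0 < n" by simp
  have q: "1 \<le> q" "q \<le> 2" "0 < q" using assms by auto
  show "eps_q q (Hn n :: (real \<Rightarrow> 'a) set) \<le> ereal (4 * real n powr (1 / q - 1))"
    unfolding eps_q_def
  proof (rule SUP_least)
    fix h :: "real \<Rightarrow> 'a"
    assume "h \<in> {h \<in> H10. H_norm h \<noteq> 0}"
    then have h: "h \<in> H10" and norm_pos: "0 < H_norm h" using H_norm_nonneg[of h] by auto
    have "(\<lambda>t. h t - H_proj (Hn n) h t) = interpolation_error n h"
      by (simp add: H_proj_Hn[OF n h] interpolation_error_def[abs_def])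
    moreover have "qvar_norm q (interpolation_error n h)
        \<le> ereal (4 * real n powr (1 / q - 1) * H_norm h)"
      using qvar_pow_interpolation_error_le[OF n h q(1,2)] q norm_pos by (intro qvar_norm_le) auto
    ultimately have "qvar_norm q (\<lambda>t. h t - H_proj (Hn n) h t)
        \<le> ereal (4 * real n powr (1 / q - 1) * H_norm h)"
      by simp
    then show "qvar_norm q (\<lambda>t. h t - H_proj (Hn n) h t) / ereal (H_norm h)
        \<le> ereal (4 * real n powr (1 / q - 1))"
      using norm_pos by (simp add: ereal_divide_le_pos mult.commute)
  qed
qed

end
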